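(* Let $\{n_k\}_{k\ge1}\subset\mathbb{Z}^+$ and $\{c_k\}_{k\ge1}\subset\mathbb{R}^+$ satisfy $n_k\ge 2$ and $n_kc_k<1$ for all $k\ge1$, let $I\subset\mathbb{R}$ be a nonempty closed interval, and let $E\in\mathcal{M}(I,\{n_k\},\{c_k\})$ be a homogeneous Moran set. If $\sup_{k\ge1}n_k<+\infty$, then $$\dim_A E=\limsup_{l\to+\infty}\ \sup_{k\ge1}\ \frac{\log (n_{k+1}\cdots n_{k+l})}{-\log (c_{k+1}\cdots c_{k+l})}.$$
   Context: Words: $\Omega_0=\{\emptyset\}$, $\Omega_k=\{\sigma_1\cdots\sigma_k:1\le\sigma_j\le n_j\}$, $\Omega=\bigcup_{k\ge0}\Omega_k$; for $\sigma\in\Omega_{k-1}$ and $1\le i\le n_k$, $\sigma*i\in\Omega_k$ denotes concatenation. A collection $\{I_\sigma:\sigma\in\Omega\}$ of closed intervals is a homogeneous Moran structure if $I_\emptyset=I$; for each $k\ge1$ and $\sigma\in\Omega_{k-1}$, the intervals $I_{\sigma*1},\dots,I_{\sigma*n_k}$ are contained in $I_\sigma$ and have pairwise disjoint interiors; and $|I_{\sigma*i}|/|I_\sigma|=c_k$ for all such $\sigma,i$ ($|\cdot|$ = diameter). The set $E=\bigcap_{k\ge1}\bigcup_{\sigma\in\Omega_k}I_\sigma$ is a homogeneous Moran set, and $\mathcal{M}(I,\{n_k\},\{c_k\})$ is the class of all such sets. For $F\subset\mathbb{R}$, $N_r(A)$ is the smallest number of balls of radius $r$ covering $A$, and the Assouad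 dimension is $\dim_A F=\inf\{s\ge0:\exists\, b,c>0\ \forall\, 0<r<R<b,\ \forall x\in F,\ N_r(B(x,R)\cap F)\le c(R/r)^s\}$. *)

theory Defs
  imports "HOL-Analysis.Analysis" "HOL-Library.Liminf_Limsup"
begin

text \<open>Words of length k: letters sigma_j (j = 1..k) with 1 \<le> sigma_j \<le> n_j.
  A word is a list; its j-th letter (1-based) is the list entry at index j-1.\<close>
definition words :: "(nat \<Rightarrow> nat) \<Rightarrow> nat \<Rightarrow> nat list set" where
  "words n k = {\<sigma>. length \<sigma> = k \<and> (\<forall>j<k. 1 \<le> \<sigma> ! j \<and> \<sigma> ! j \<le> n (Suc j))}"

definition is_closed_interval :: "real set \<Rightarrow> bool" where
  "is_closed_interval S \<longleftrightarrow> (\<exists>a b. a \<le> b \<and> S = {a..b})"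

definition homogeneous_moran_structure ::
  "real set \<Rightarrow> (nat \<Rightarrow> nat) \<Rightarrow> (nat \<Rightarrow> real) \<Rightarrow> (nat list \<Rightarrow> real set) \<Rightarrow> bool" where
  "homogeneous_moran_structure I n c J \<longleftrightarrow>
     J [] = I \<and>
     (\<forall>k. \<forall>\<sigma>\<in>words n k. is_closed_interval (J \<sigma>)) \<and>
     (\<forall>k\<ge>1. \<forall>\<sigma>\<in>words n (k - 1).
        (\<forall>i\<in>{1..n k}. J (\<sigma> @ [i]) \<subseteq> J \<sigma> \<and>
                         diameter (J (\<sigma> @ [i])) / diameter (J \<sigma>) = c k) \<and>
        (\<forall>i\<in>{1..n k}. \<forall>i'\<in>{1..n k}. i \<noteq> i' \<longrightarrow>
            interior (J (\<sigma> @ [i])) \<inter> interior (J (\<sigma> @ [i'])) = {}))"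

definition moran_set :: "(nat \<Rightarrow> nat) \<Rightarrow> (nat list \<Rightarrow> real set) \<Rightarrow> real set" where
  "moran_set n J = (\<Inter>k\<in>{1..}. \<Union>\<sigma>\<in>words n k. J \<sigma>)"

definition moran_class :: "real set \<Rightarrow> (nat \<Rightarrow> nat) \<Rightarrow> (nat \<Rightarrow> real) \<Rightarrow> real set set" where
  "moran_class I n c = {E. \<exists>J. homogeneous_moran_structure I n c J \<and> E = moran_set n J}"

definition covering_number :: "real \<Rightarrow> real set \<Rightarrow> nat" where
  "covering_number r A = Inf {card C | C. finite C \<and> A \<subseteq> (\<Union>x\<in>C. ball x r)}"

definition assouad_dim :: "real set \<Rightarrow> real" where
  "assouad_dim F = Inf {s. s \<ge> 0 \<and> (\<exists>b>0. \<exists>C>0. \<forall>r R. 0 < r \<and> r < R \<and> R < b \<longrightarrow>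
       (\<forall>x\<in>F. real (covering_number r (ball x R \<inter> F)) \<le> C * (R / r) powr s))}"

end

theory Submission
  imports Defs
begin

text \<open>Let L_k = (b - a) c_1 ... c_k be the common length of the level-k intervals. Distinct
  intervals of one level have disjoint interiors, so a ball of radius R meets at most
  (2R + L_k) / L_k of them.

  Upper bound (N = sup n_k): if L_(k+1) < R <= L_k and L_(m+1) < r <= L_m, then B(x, R) meets at
  most three level-k intervals, and their at most 3 n_(k+1) ... n_(m+1) <= 3 N^2 n_(k+2) ... n_m
  descendants of level m+1 yield a cover of B(x, R) \<inter> E by r-balls, while
  c_(k+2) ... c_m = L_m / L_(k+1) >= r / R.

  Lower bound: if x lies in a level-k interval, then B(x, 2 L_k) contains a point of E in each of
  its n_(k+1) ... n_(k+l) descendants of level k+l, and a ball of radius r = L_(k+l) / 2 meets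
  at most two of these, so n_(k+1) ... n_(k+l) <= 2 N_r(B(x, 2 L_k) \<inter> E), where
  2 L_k / r = 4 / (c_(k+1) ... c_(k+l)).

  Hence s is an admissible exponent iff n_(k+1) ... n_(k+l) <= K (c_(k+1) ... c_(k+l))^(-s)
  uniformly in k for all large l. As c_k <= 1/2, the denominator -log (c_(k+1) ... c_(k+l)) is at
  least l log 2, so the constant K disappears in the limit of the logarithmic ratios.\<close>

section \<open>Block products and words\<close>

definition block_prod :: "(nat \<Rightarrow> 'a::comm_monoid_mult) \<Rightarrow> nat \<Rightarrow> nat \<Rightarrow> 'a" where
  "block_prod f k l = (\<Prod>i\<in>{k+1..k+l}. f i)"

lemma block_prod_0 [simp]: "block_prod f k 0 = 1"
  by (simp add: block_prod_def)

lemma block_prod_Suc: "block_prod f k (Suc l) = block_prod f k l * f (k + Suc l)"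
proof -
  have "{k+1..k+Suc l} = insert (k + Suc l) {k+1..k+l}" by auto
  then show ?thesis by (simp add: block_prod_def mult.commute)
qed

lemma block_prod_add: "block_prod f k (l + l') = block_prod f k l * block_prod f (k + l) l'"
  by (induction l') (simp_all add: block_prod_Suc mult.assoc add.assoc)

definition words_from :: "(nat \<Rightarrow> nat) \<Rightarrow> nat \<Rightarrow> nat \<Rightarrow> nat list set" where
  "words_from n k l = {w. length w = l \<and> (\<forall>j<l. 1 \<le> w ! j \<and> w ! j \<le> n (k + Suc j))}"

lemma words_eq_words_from: "words n l = words_from n 0 l"
  by (simp add: words_def words_from_def)

lemma words_from_0 [simp]: "words_from n k 0 = {[]}"
  by (auto simp: words_from_def)

lemma words_from_Suc:
  "words_from n k (Suc l) = (\<lambda>(w, i). w @ [i]) ` (words_from n k l \<times> {1..n (k + Suc l)})"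
proof (intro set_eqI iffI)
  fix x assume x: "x \<in> words_from n k (Suc l)"
  then have len: "length x = Suc l" by (simp add: words_from_def)
  then have "x = butlast x @ [x ! l]"
    by (metis append_butlast_last_id diff_Suc_1 last_conv_nth list.size(3) nat.distinct(1))
  moreover have "butlast x \<in> words_from n k l" "x ! l \<in> {1..n (k + Suc l)}"
    using x len by (auto simp: words_from_def nth_butlast)
  ultimately show "x \<in> (\<lambda>(w, i). w @ [i]) ` (words_from n k l \<times> {1..n (k + Suc l)})"
    by force
next
  fix x assume "x \<in> (\<lambda>(w, i). w @ [i]) ` (words_from n k l \<times> {1..n (k + Suc l)})"
  then show "x \<in> words_from n k (Suc l)"
    by (auto simp: words_from_def nth_append less_Suc_eq)
qed

lemma finite_words_from: "finite (words_from n k l)"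
  by (induction l) (simp_all add: words_from_Suc)

lemma card_words_from: "card (words_from n k l) = block_prod n k l"
proof (induction l)
  case (Suc l)
  have "inj_on (\<lambda>(w, i). w @ [i]) (words_from n k l \<times> {1..n (k + Suc l)})"
    by (auto simp: inj_on_def)
  with Suc show ?case
    by (simp add: words_from_Suc card_image card_cartesian_product block_prod_Suc)
qed simp

lemma words_0: "words n 0 = {[]}"
  by (simp add: words_eq_words_from)

lemma finite_words: "finite (words n k)"
  by (simp add: words_eq_words_from finite_words_from)

lemma words_Suc_iff:
  "\<tau> \<in> words n (Suc k) \<longleftrightarrow> (\<exists>\<sigma> i. \<tau> = \<sigma> @ [i] \<and> \<sigma> \<in> words n k \<and> i \<in> {1..n (Suc k)})"
  using words_from_Suc[of n 0 k] by (auto simp: words_eq_words_from)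

lemma append_mem_words:
  assumes "\<sigma> \<in> words n k" and "w \<in> words_from n k l"
  shows "\<sigma> @ w \<in> words n (k + l)"
proof -
  have len: "length \<sigma> = k" "length w = l"
    using assms by (auto simp: words_def words_from_def)
  have "1 \<le> (\<sigma> @ w) ! j \<and> (\<sigma> @ w) ! j \<le> n (Suc j)" if "j < k + l" for j
  proof (cases "j < k")
    case True
    then show ?thesis using assms(1) len by (simp add: nth_append words_def)
  next
    case False
    have "j - k < l" using False that by simp
    with assms(2) have "1 \<le> w ! (j - k) \<and> w ! (j - k) \<le> n (k + Suc (j - k))"
      by (simp add: words_from_def)
    then show ?thesis using False len by (simp add: nth_append)
  qed
  then show ?thesis using len by (simp add: words_def)
qed

lemma take_mem_words: "\<tau> \<in> words n (k + l) \<Longrightarrow> take k \<tau> \<in> words n k"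
  by (auto simp: words_def)

lemma drop_mem_words_from: "\<tau> \<in> words n (k + l) \<Longrightarrow> drop k \<tau> \<in> words_from n k l"
  by (auto simp: words_def words_from_def add.commute add.left_commute)

section \<open>Covering numbers and Assouad exponents\<close>

lemma covering_number_le:
  assumes "finite C" and "A \<subseteq> (\<Union>x\<in>C. ball x r)"
  shows "covering_number r A \<le> card C"
  unfolding covering_number_def using assms by (intro cInf_lower) auto

lemma covering_number_attained:
  assumes "bounded A" and "r > 0"
  obtains C where "finite C" "A \<subseteq> (\<Union>x\<in>C. ball x r)" "card C = covering_number r A"
proof -
  have "seq_compact (closure A)"
    using assms(1) by (intro compact_imp_seq_compact) simp
  from seq_compact_imp_totally_bounded[OF this, rule_format, OF assms(2)]
  obtain C where "finite C" "closure A \<subseteq> (\<Union>x\<in>C. ball x r)"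
    by (elim exE conjE)
  moreover have "A \<subseteq> (\<Union>x\<in>C. ball x r)"
    using closure_subset \<open>closure A \<subseteq> _\<close> by (rule subset_trans)
  ultimately have "\<exists>C. finite C \<and> A \<subseteq> (\<Union>x\<in>C. ball x r)"
    by blast
  then have "{card C | C. finite C \<and> A \<subseteq> (\<Union>x\<in>C. ball x r)} \<noteq> {}"
    by blast
  then have "covering_number r A \<in> {card C | C. finite C \<and> A \<subseteq> (\<Union>x\<in>C. ball x r)}"
    unfolding covering_number_def by (rule Inf_nat_def1)
  then show ?thesis by (auto intro: that)
qed

lemma card_le_if_separated:
  fixes S :: "real set"
  assumes S: "S \<subseteq> {u<..<v}" and len: "v - u \<le> real j * \<delta>" and \<delta>: "\<delta> > 0"
    and sep: "\<And>x y. x \<in> S \<Longrightarrow> y \<in> S \<Longrightarrow> x \<noteq> y \<Longrightarrow> \<delta> \<le> \<bar>x - y\<bar>"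
  shows "card S \<le> j"
proof -
  define f where "f x = nat \<lfloor>(x - u) / \<delta>\<rfloor>" for x
  have "inj_on f S"
  proof (rule inj_onI)
    fix x y assume x: "x \<in> S" and y: "y \<in> S" and "f x = f y"
    moreover have "0 \<le> (x - u) / \<delta>" "0 \<le> (y - u) / \<delta>"
      using x y S \<delta> by auto
    ultimately have "\<lfloor>(x - u) / \<delta>\<rfloor> = \<lfloor>(y - u) / \<delta>\<rfloor>"
      by (simp add: f_def eq_nat_nat_iff)
    then have "\<bar>(x - u) / \<delta> - (y - u) / \<delta>\<bar> < 1" by linarith
    then have "\<bar>x - y\<bar> < \<delta>"
      using \<delta> by (simp add: diff_divide_distrib[symmetric] abs_divide)
    then show "x = y" using sep[OF x y] by fastforce
  qed
  moreover have "f ` S \<subseteq> {..<j}"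
  proof
    fix z assume "z \<in> f ` S"
    then obtain x where x: "x \<in> S" "z = f x" by auto
    then have "0 < (x - u) / \<delta>" "(x - u) / \<delta> < real j"
      using S len \<delta> by (auto simp: field_simps)
    then show "z \<in> {..<j}" using x by (simp add: f_def nat_less_iff floor_less_iff)
  qed
  ultimately show ?thesis
    using card_inj_on_le[of f S "{..<j}"] by simp
qed

definition assouad_exponent :: "real set \<Rightarrow> real \<Rightarrow> bool" where
  "assouad_exponent F s \<longleftrightarrow> s \<ge> 0 \<and> (\<exists>b>0. \<exists>C>0. \<forall>r R. 0 < r \<and> r < R \<and> R < b \<longrightarrow>
     (\<forall>x\<in>F. real (covering_number r (ball x R \<inter> F)) \<le> C * (R / r) powr s))"

lemma assouad_dim_eqI:
  assumes lower: "\<And>s. assouad_exponent F s \<Longrightarrow> d \<le> s"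
    and upper: "\<And>s. d < s \<Longrightarrow> assouad_exponent F s"
  shows "assouad_dim F = d"
proof -
  have dim: "assouad_dim F = Inf (Collect (assouad_exponent F))"
    unfolding assouad_dim_def assouad_exponent_def ..
  have "Collect (assouad_exponent F) \<noteq> {}"
    using upper[of "d + 1"] by auto
  then have "d \<le> Inf (Collect (assouad_exponent F))"
    using lower by (intro cInf_greatest) auto
  moreover have "Inf (Collect (assouad_exponent F)) \<le> d"
  proof (rule field_le_epsilon)
    fix \<epsilon> :: real assume "0 < \<epsilon>"
    have "bdd_below (Collect (assouad_exponent F))"
      by (intro bdd_belowI[of _ 0]) (simp add: assouad_exponent_def)
    with \<open>0 < \<epsilon>\<close> show "Inf (Collect (assouad_exponent F)) \<le> d + \<epsilon>"
      using upper[of "d + \<epsilon>"] by (intro cInf_lower) auto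
  qed
  ultimately show ?thesis using dim by simp
qed

section \<open>The ratios of block products\<close>

locale moran_params =
  fixes n :: "nat \<Rightarrow> nat" and c :: "nat \<Rightarrow> real"
  assumes n_ge_2: "\<And>k. k \<ge> 1 \<Longrightarrow> n k \<ge> 2"
    and c_pos: "\<And>k. k \<ge> 1 \<Longrightarrow> c k > 0"
    and n_mult_c_less_1: "\<And>k. k \<ge> 1 \<Longrightarrow> real (n k) * c k < 1"
begin

lemma c_le_half:
  assumes "k \<ge> 1"
  shows "c k \<le> 1 / 2"
proof -
  have "2 * c k \<le> real (n k) * c k"
    using n_ge_2[OF assms] c_pos[OF assms] by (intro mult_right_mono) auto
  then show ?thesis using n_mult_c_less_1[OF assms] by linarith
qed

lemma block_prod_c_pos: "block_prod c k l > 0"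
  unfolding block_prod_def by (rule prod_pos) (simp add: c_pos)

lemma block_prod_c_le_half_pow: "block_prod c k l \<le> (1 / 2) ^ l"
proof -
  have "block_prod c k l \<le> (\<Prod>i\<in>{k+1..k+l}. 1 / 2)"
    unfolding block_prod_def using c_le_half c_pos by (intro prod_mono) (auto intro: less_imp_le)
  then show ?thesis by simp
qed

lemma block_prod_c_le_1: "block_prod c k l \<le> 1"
  using block_prod_c_le_half_pow[of k l] power_le_one[of "1 / 2 :: real" l] by linarith

lemma block_prod_n_ge_1: "block_prod n k l \<ge> 1"
  unfolding block_prod_def
proof (rule prod_ge_1)
  fix i assume "i \<in> {k+1..k+l}"
  then show "1 \<le> n i" using n_ge_2[of i] by simp
qed

lemma block_prod_n_le_pow:
  assumes "\<And>i. i \<ge> 1 \<Longrightarrow> n i \<le> N"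
  shows "block_prod n k l \<le> N ^ l"
proof -
  have "block_prod n k l \<le> (\<Prod>i\<in>{k+1..k+l}. N)"
    unfolding block_prod_def using assms by (intro prod_mono) auto
  then show ?thesis by simp
qed

lemma block_prod_n_le_middle:
  assumes N: "\<And>i. i \<ge> 1 \<Longrightarrow> n i \<le> N"
  shows "block_prod n k (l1 + l + l2) \<le> N ^ (l1 + l2) * block_prod n (k + l1) l"
proof -
  have "block_prod n k (l1 + l + l2)
      = block_prod n k l1 * block_prod n (k + l1) l * block_prod n (k + l1 + l) l2"
    by (simp add: block_prod_add add.assoc)
  also have "\<dots> \<le> N ^ l1 * block_prod n (k + l1) l * N ^ l2"
    by (intro mult_mono block_prod_n_le_pow[OF N]) auto
  finally show ?thesis by (simp add: power_add mult_ac)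
qed

lemma ln_block_prod_n_le: "ln (real (block_prod n k l)) \<le> - ln (block_prod c k l)"
proof -
  have "real (block_prod n k l) * block_prod c k l = (\<Prod>i\<in>{k+1..k+l}. real (n i) * c i)"
    by (simp add: block_prod_def prod.distrib)
  also have "\<dots> \<le> 1"
    by (rule prod_le_1) (simp add: n_mult_c_less_1 c_pos less_imp_le)
  finally have "ln (real (block_prod n k l) * block_prod c k l) \<le> 0"
    using block_prod_c_pos[of k l] block_prod_n_ge_1[of k l] by simp
  then show ?thesis
    using block_prod_c_pos[of k l] block_prod_n_ge_1[of k l] by (simp add: ln_mult)
qed

lemma neg_ln_block_prod_c_ge: "real l * ln 2 \<le> - ln (block_prod c k l)"
proof -
  have "ln (block_prod c k l) \<le> ln ((1 / 2) ^ l)"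
    using block_prod_c_le_half_pow block_prod_c_pos by simp
  then show ?thesis by (simp add: ln_realpow ln_div)
qed

definition dim_ratio :: "nat \<Rightarrow> nat \<Rightarrow> real" where
  "dim_ratio k l = ln (real (block_prod n k l)) / - ln (block_prod c k l)"

definition dim_ratio_sup :: "nat \<Rightarrow> real" where
  "dim_ratio_sup l = (SUP k\<in>{1..}. dim_ratio k l)"

lemma dim_ratio_nonneg: "0 \<le> dim_ratio k l"
  unfolding dim_ratio_def using block_prod_n_ge_1 block_prod_c_le_1 block_prod_c_pos
  by (intro divide_nonneg_nonneg) auto

lemma dim_ratio_le_1: "dim_ratio k l \<le> 1"
proof (cases "- ln (block_prod c k l) = 0")
  case False
  moreover have "0 \<le> - ln (block_prod c k l)"
    using block_prod_c_le_1[of k l] block_prod_c_pos[of k l] by simp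
  ultimately show ?thesis
    unfolding dim_ratio_def using ln_block_prod_n_le[of k l] by (subst divide_le_eq_1_pos) auto
qed (simp add: dim_ratio_def)

lemma dim_ratio_le_sup: "k \<ge> 1 \<Longrightarrow> dim_ratio k l \<le> dim_ratio_sup l"
  unfolding dim_ratio_sup_def
  by (rule cSUP_upper) (auto intro: bdd_aboveI[of _ 1] simp: dim_ratio_le_1)

lemma dim_ratio_sup_nonneg: "0 \<le> dim_ratio_sup l"
  using dim_ratio_nonneg[of 1 l] dim_ratio_le_sup[of 1 l] by simp

lemma dim_ratio_sup_le_1: "dim_ratio_sup l \<le> 1"
  unfolding dim_ratio_sup_def by (rule cSUP_least) (auto simp: dim_ratio_le_1)

lemma limsup_dim_ratio_sup_real:
  obtains d where "limsup (\<lambda>l. ereal (dim_ratio_sup l)) = ereal d" and "0 \<le> d"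
proof -
  have "limsup (\<lambda>l. ereal 0) \<le> limsup (\<lambda>l. ereal (dim_ratio_sup l))"
    by (rule Limsup_mono) (simp add: dim_ratio_sup_nonneg)
  moreover have "limsup (\<lambda>l. ereal (dim_ratio_sup l)) \<le> limsup (\<lambda>l. ereal 1)"
    by (rule Limsup_mono) (simp add: dim_ratio_sup_le_1)
  ultimately show ?thesis
    using that by (cases "limsup (\<lambda>l. ereal (dim_ratio_sup l))") (simp_all add: Limsup_const)
qed

lemma dim_ratio_le_if_block_bound:
  assumes "K > 0" and "l \<ge> 1"
    and bound: "real (block_prod n k l) \<le> K * block_prod c k l powr (-s)"
  shows "dim_ratio k l \<le> s + \<bar>ln K\<bar> / ln 2 / real l"
proof -
  define D where "D = - ln (block_prod c k l)"
  have D: "real l * ln 2 \<le> D" "0 < real l * ln 2"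
    unfolding D_def using neg_ln_block_prod_c_ge \<open>l \<ge> 1\<close> by auto
  have "ln (real (block_prod n k l)) \<le> ln (K * block_prod c k l powr (-s))"
    using bound block_prod_n_ge_1[of k l] by simp
  also have "\<dots> = ln K + s * D"
    using \<open>K > 0\<close> block_prod_c_pos[of k l] by (simp add: D_def ln_mult)
  finally have "dim_ratio k l \<le> (ln K + s * D) / D"
    using D by (simp add: dim_ratio_def D_def[symmetric] divide_right_mono)
  also have "\<dots> = s + ln K / D"
    using D by (simp add: field_simps)
  also have "ln K / D \<le> \<bar>ln K\<bar> / (real l * ln 2)"
    using D by (intro frac_le) auto
  finally show ?thesis by (simp add: mult.commute)
qed

lemma block_prod_n_less_if_dim_ratio_less:
  assumes "l \<ge> 1" and "dim_ratio k l < s"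
  shows "real (block_prod n k l) < block_prod c k l powr (-s)"
proof -
  have "0 < real l * ln 2" using \<open>l \<ge> 1\<close> by simp
  then have D: "0 < - ln (block_prod c k l)"
    using neg_ln_block_prod_c_ge[of l k] by linarith
  have "ln (real (block_prod n k l)) < s * - ln (block_prod c k l)"
    using assms(2) unfolding dim_ratio_def by (simp only: pos_divide_less_eq[OF D])
  then have "exp (ln (real (block_prod n k l))) < exp (- s * ln (block_prod c k l))"
    by simp
  then show ?thesis
    using block_prod_n_ge_1[of k l] block_prod_c_pos[of k l] by (simp add: powr_def)
qed

lemma limsup_dim_ratio_sup_le:
  assumes "K > 0"
    and bound: "\<And>k l. k \<ge> 1 \<Longrightarrow> l \<ge> l0 \<Longrightarrow>
      real (block_prod n k l) \<le> K * block_prod c k l powr (-s)"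
  shows "limsup (\<lambda>l. ereal (dim_ratio_sup l)) \<le> ereal s"
proof -
  let ?g = "\<lambda>l. s + \<bar>ln K\<bar> / ln 2 / real l"
  have "\<forall>\<^sub>F l in sequentially. ereal (dim_ratio_sup l) \<le> ereal (?g l)"
  proof (rule eventually_sequentiallyI)
    fix l assume "max l0 1 \<le> l"
    then have "dim_ratio k l \<le> ?g l" if "k \<ge> 1" for k
      using that by (intro dim_ratio_le_if_block_bound[OF \<open>K > 0\<close>] bound) auto
    then have "dim_ratio_sup l \<le> ?g l"
      unfolding dim_ratio_sup_def by (intro cSUP_least) auto
    then show "ereal (dim_ratio_sup l) \<le> ereal (?g l)" by simp
  qed
  then have "limsup (\<lambda>l. ereal (dim_ratio_sup l)) \<le> limsup (\<lambda>l. ereal (?g l))"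
    by (rule Limsup_mono)
  also have "?g \<longlonglongrightarrow> s + 0"
    by (intro tendsto_add tendsto_const lim_const_over_n)
  then have "limsup (\<lambda>l. ereal (?g l)) = ereal s"
    by (intro lim_imp_Limsup) simp_all
  finally show ?thesis .
qed

lemma block_bound_if_limsup_less:
  assumes N: "\<And>i. i \<ge> 1 \<Longrightarrow> n i \<le> N" and "s \<ge> 0"
    and less: "limsup (\<lambda>l. ereal (dim_ratio_sup l)) < ereal s"
  obtains K where "\<And>k l. k \<ge> 1 \<Longrightarrow> real (block_prod n k l) \<le> K * block_prod c k l powr (-s)"
proof -
  obtain l0 where l0: "\<And>l. l \<ge> l0 \<Longrightarrow> dim_ratio_sup l < s"
    using Limsup_lessD[OF less] by (auto simp: eventually_sequentially)
  have "N \<ge> 1" using N[of 1] n_ge_2[of 1] by simp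
  then have N_pow: "1 \<le> real N ^ l0" by simp
  have "real (block_prod n k l) \<le> N ^ l0 * block_prod c k l powr (-s)" if "k \<ge> 1" for k l
  proof -
    have pow: "1 \<le> block_prod c k l powr (-s)"
      using powr_mono2'[of "-s" "block_prod c k l" 1] \<open>s \<ge> 0\<close> block_prod_c_pos block_prod_c_le_1
      by simp
    show ?thesis
    proof (cases "l0 \<le> l \<and> 1 \<le> l")
      case True
      then have "dim_ratio_sup l < s" using l0 by simp
      then have "dim_ratio k l < s" using dim_ratio_le_sup[OF \<open>k \<ge> 1\<close>, of l] by linarith
      then have "real (block_prod n k l) < block_prod c k l powr (-s)"
        using True by (intro block_prod_n_less_if_dim_ratio_less) auto
      also have "\<dots> \<le> N ^ l0 * block_prod c k l powr (-s)"
        using mult_right_mono[OF N_pow, of "block_prod c k l powr (-s)"] by simp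
      finally show ?thesis by simp
    next
      case False
      then have "l \<le> l0" by auto
      have "real (block_prod n k l) \<le> real N ^ l"
        using block_prod_n_le_pow[OF N] by (metis of_nat_le_iff of_nat_power)
      also have "\<dots> \<le> real N ^ l0"
        using \<open>N \<ge> 1\<close> \<open>l \<le> l0\<close> by (simp add: power_increasing)
      also have "\<dots> \<le> N ^ l0 * block_prod c k l powr (-s)"
        using mult_left_mono[OF pow, of "real N ^ l0"] by simp
      finally show ?thesis .
    qed
  qed
  then show ?thesis using that by blast
qed

lemma block_bound_extend:
  assumes N: "\<And>i. i \<ge> 1 \<Longrightarrow> n i \<le> N" and "s \<ge> 0" and "K \<ge> 0"
    and bound: "\<And>k l. k \<ge> k0 \<Longrightarrow> real (block_prod n k l) \<le> K * block_prod c k l powr (-s)"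
    and "k0 \<le> l"
  shows "real (block_prod n k l) \<le> N ^ k0 * K * block_prod c k l powr (-s)"
proof -
  define d where "d = k0 - k"
  define l' where "l' = l - d"
  have split: "block_prod f k l = block_prod f k d * block_prod f (k + d) l'"
    for f :: "nat \<Rightarrow> 'a::comm_monoid_mult"
    using block_prod_add[of f k d l'] \<open>k0 \<le> l\<close> by (simp add: d_def l'_def)
  have "N \<ge> 1" using N[of 1] n_ge_2[of 1] by simp
  have "block_prod n k d \<le> N ^ k0"
    using block_prod_n_le_pow[OF N, of k d] power_increasing[of d k0 N] \<open>N \<ge> 1\<close>
    by (simp add: d_def)
  then have first: "real (block_prod n k d) \<le> real N ^ k0"
    by (metis of_nat_le_iff of_nat_power)
  have "block_prod c k l \<le> block_prod c (k + d) l'"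
    using split[of c] block_prod_c_le_1[of k d] block_prod_c_pos[of "k + d" l']
    by (simp add: mult_le_cancel_right1)
  then have "block_prod c (k + d) l' powr (-s) \<le> block_prod c k l powr (-s)"
    using \<open>s \<ge> 0\<close> block_prod_c_pos by (intro powr_mono2') auto
  then have "K * block_prod c (k + d) l' powr (-s) \<le> K * block_prod c k l powr (-s)"
    using \<open>K \<ge> 0\<close> by (rule mult_left_mono)
  moreover have "k0 \<le> k + d" by (simp add: d_def)
  ultimately have second: "real (block_prod n (k + d) l') \<le> K * block_prod c k l powr (-s)"
    using bound[of "k + d" l'] by linarith
  have "real (block_prod n k l) = real (block_prod n k d) * real (block_prod n (k + d) l')"
    by (simp add: split[of n])
  also have "\<dots> \<le> N ^ k0 * (K * block_prod c k l powr (-s))"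
    using first second by (intro mult_mono) auto
  finally show ?thesis by (simp add: mult.assoc)
qed

end

section \<open>Geometry of homogeneous Moran sets\<close>

locale moran = moran_params n c
  for n :: "nat \<Rightarrow> nat" and c :: "nat \<Rightarrow> real" +
  fixes a b :: real and J :: "nat list \<Rightarrow> real set"
  assumes a_less_b: "a < b"
    and moran_structure: "homogeneous_moran_structure {a..b} n c J"
begin

definition len :: "nat \<Rightarrow> real" where
  "len k = (b - a) * block_prod c 0 k"

lemma len_0: "len 0 = b - a"
  by (simp add: len_def)

lemma len_pos: "len k > 0"
  using a_less_b block_prod_c_pos by (simp add: len_def)

lemma len_add: "len (k + l) = len k * block_prod c k l"
  by (simp add: len_def block_prod_add)

lemma len_antimono: "k \<le> m \<Longrightarrow> len m \<le> len k"
  using len_add[of k "m - k"] block_prod_c_le_1[of k "m - k"] len_pos[of k]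
  by (simp add: mult_left_le)

lemma exists_len_less:
  assumes "r > 0"
  obtains m where "len m < r"
proof -
  obtain m where m: "(1 / 2 :: real) ^ m < r / (b - a)"
    using real_arch_pow_inv[of "r / (b - a)" "1 / 2"] assms a_less_b by auto
  have "len m \<le> (b - a) * (1 / 2) ^ m"
    unfolding len_def using a_less_b block_prod_c_le_half_pow by (intro mult_left_mono) auto
  also have "\<dots> < r" using m a_less_b by (simp add: field_simps)
  finally show ?thesis by (rule that)
qed

lemma len_bracket:
  assumes "0 < r" and "r \<le> len 0"
  obtains k where "len (Suc k) < r" and "r \<le> len k"
proof -
  define m where "m = (LEAST m. len m < r)"
  have m: "len m < r"
    unfolding m_def using exists_len_less[OF assms(1)] by (metis LeastI)
  have "m \<noteq> 0"
  proof
    assume "m = 0"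
    with m assms(2) show False by simp
  qed
  have "r \<le> len (m - 1)"
  proof (rule ccontr)
    assume "\<not> r \<le> len (m - 1)"
    then have "m \<le> m - 1" unfolding m_def by (intro Least_le) simp
    with \<open>m \<noteq> 0\<close> show False by simp
  qed
  with m \<open>m \<noteq> 0\<close> show ?thesis using that[of "m - 1"] by simp
qed

lemma replicate_one_mem_words_from: "replicate l 1 \<in> words_from n k l"
proof -
  have "1 \<le> n (k + Suc j)" for j
    using n_ge_2[of "k + Suc j"] by simp
  then show ?thesis by (simp add: words_from_def)
qed

lemma
  assumes "\<sigma> \<in> words n k" and "i \<in> {1..n (Suc k)}"
  shows J_append_subset: "J (\<sigma> @ [i]) \<subseteq> J \<sigma>"
    and diameter_J_append: "diameter (J (\<sigma> @ [i])) / diameter (J \<sigma>) = c (Suc k)"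
    and interior_J_append_disjoint: "\<And>i'. i' \<in> {1..n (Suc k)} \<Longrightarrow> i \<noteq> i' \<Longrightarrow>
      interior (J (\<sigma> @ [i])) \<inter> interior (J (\<sigma> @ [i'])) = {}"
proof -
  have "\<forall>k\<ge>1. \<forall>\<sigma>\<in>words n (k - 1).
      (\<forall>i\<in>{1..n k}. J (\<sigma> @ [i]) \<subseteq> J \<sigma> \<and> diameter (J (\<sigma> @ [i])) / diameter (J \<sigma>) = c k) \<and>
      (\<forall>i\<in>{1..n k}. \<forall>i'\<in>{1..n k}. i \<noteq> i' \<longrightarrow>
         interior (J (\<sigma> @ [i])) \<inter> interior (J (\<sigma> @ [i'])) = {})"
    using moran_structure unfolding homogeneous_moran_structure_def by blast
  from this[rule_format, of "Suc k" \<sigma>] assms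
  show "J (\<sigma> @ [i]) \<subseteq> J \<sigma>"
    and "diameter (J (\<sigma> @ [i])) / diameter (J \<sigma>) = c (Suc k)"
    and "\<And>i'. i' \<in> {1..n (Suc k)} \<Longrightarrow> i \<noteq> i' \<Longrightarrow>
      interior (J (\<sigma> @ [i])) \<inter> interior (J (\<sigma> @ [i'])) = {}"
    by auto
qed

lemma diameter_J: "\<sigma> \<in> words n k \<Longrightarrow> diameter (J \<sigma>) = len k"
proof (induction k arbitrary: \<sigma>)
  case 0
  then have "J \<sigma> = {a..b}"
    using moran_structure by (simp add: words_0 homogeneous_moran_structure_def)
  then show ?case using a_less_b by (simp add: len_0)
next
  case (Suc k)
  then obtain \<rho> i where \<rho>: "\<sigma> = \<rho> @ [i]" "\<rho> \<in> words n k" "i \<in> {1..n (Suc k)}"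
    by (auto simp: words_Suc_iff)
  have "len (Suc k) = c (Suc k) * len k"
    using len_add[of k 1] by (simp add: block_prod_def)
  then show ?case
    using diameter_J_append[OF \<rho>(2,3)] Suc.IH[OF \<rho>(2)] len_pos[of k] \<rho>(1)
    by (simp add: field_simps)
qed

definition left_end :: "nat list \<Rightarrow> real" where
  "left_end \<sigma> = Inf (J \<sigma>)"

lemma J_eq_Icc:
  assumes \<sigma>: "\<sigma> \<in> words n k"
  shows "J \<sigma> = {left_end \<sigma> .. left_end \<sigma> + len k}"
proof -
  obtain p q where "p \<le> q" "J \<sigma> = {p..q}"
    using \<sigma> moran_structure unfolding homogeneous_moran_structure_def is_closed_interval_def by blast
  moreover have "q - p = len k" using diameter_J[OF \<sigma>] calculation by simp
  ultimately show ?thesis by (simp add: left_end_def)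
qed

lemma J_subset_J_take: "\<tau> \<in> words n (k + l) \<Longrightarrow> J \<tau> \<subseteq> J (take k \<tau>)"
proof (induction l arbitrary: \<tau>)
  case (Suc l)
  then obtain \<rho> i where \<rho>: "\<tau> = \<rho> @ [i]" "\<rho> \<in> words n (k + l)" "i \<in> {1..n (Suc (k + l))}"
    by (auto simp: words_Suc_iff)
  have "length \<rho> = k + l" using \<rho>(2) by (simp add: words_def)
  then have "take k \<tau> = take k \<rho>" using \<rho>(1) by simp
  then show ?case
    using J_append_subset[OF \<rho>(2,3)] Suc.IH[OF \<rho>(2)] \<rho>(1) by simp
qed (simp add: words_def)

lemma interior_J_disjoint:
  "\<sigma> \<in> words n k \<Longrightarrow> \<tau> \<in> words n k \<Longrightarrow> \<sigma> \<noteq> \<tau> \<Longrightarrow> interior (J \<sigma>) \<inter> interior (J \<tau>) = {}"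
proof (induction k arbitrary: \<sigma> \<tau>)
  case 0
  then show ?case by (simp add: words_0)
next
  case (Suc k)
  obtain \<rho> i where \<rho>: "\<sigma> = \<rho> @ [i]" "\<rho> \<in> words n k" "i \<in> {1..n (Suc k)}"
    using Suc.prems by (auto simp: words_Suc_iff)
  obtain \<rho>' i' where \<rho>': "\<tau> = \<rho>' @ [i']" "\<rho>' \<in> words n k" "i' \<in> {1..n (Suc k)}"
    using Suc.prems by (auto simp: words_Suc_iff)
  show ?case
  proof (cases "\<rho> = \<rho>'")
    case True
    then show ?thesis
      using interior_J_append_disjoint[OF \<rho>(2,3) \<rho>'(3)] Suc.prems \<rho>(1) \<rho>'(1) by auto
  next
    case False
    have "interior (J \<sigma>) \<subseteq> interior (J \<rho>)" "interior (J \<tau>) \<subseteq> interior (J \<rho>')"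
      using J_append_subset[OF \<rho>(2,3)] J_append_subset[OF \<rho>'(2,3)] \<rho>(1) \<rho>'(1)
      by (simp_all add: interior_mono)
    then show ?thesis using Suc.IH[OF \<rho>(2) \<rho>'(2) False] by blast
  qed
qed

lemma left_end_separated:
  assumes "\<sigma> \<in> words n k" and "\<tau> \<in> words n k" and "\<sigma> \<noteq> \<tau>"
  shows "len k \<le> \<bar>left_end \<sigma> - left_end \<tau>\<bar>"
proof (rule ccontr)
  let ?p = "left_end \<sigma>" and ?q = "left_end \<tau>"
  assume "\<not> len k \<le> \<bar>?p - ?q\<bar>"
  then have "(?p + ?q + len k) / 2 \<in> {?p<..<?p + len k} \<inter> {?q<..<?q + len k}"
    by (auto simp: abs_less_iff)
  moreover have "interior (J \<sigma>) = {?p<..<?p + len k}" "interior (J \<tau>) = {?q<..<?q + len k}"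
    using J_eq_Icc[OF assms(1)] J_eq_Icc[OF assms(2)] by (metis interior_atLeastAtMost_real)+
  ultimately show False using interior_J_disjoint[OF assms] by blast
qed

lemma card_words_meeting_le:
  assumes "A \<subseteq> ball x R" and "2 * R + len k \<le> real j * len k"
  shows "card {\<tau> \<in> words n k. J \<tau> \<inter> A \<noteq> {}} \<le> j"
proof -
  let ?T = "{\<tau> \<in> words n k. J \<tau> \<inter> A \<noteq> {}}"
  have "inj_on left_end ?T"
  proof (rule inj_onI, rule ccontr)
    fix \<sigma> \<tau> assume "\<sigma> \<in> ?T" "\<tau> \<in> ?T" "left_end \<sigma> = left_end \<tau>" "\<sigma> \<noteq> \<tau>"
    then show False using left_end_separated[of \<sigma> k \<tau>] len_pos[of k] by simp
  qed
  then have "card ?T = card (left_end ` ?T)"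
    by (simp add: card_image)
  also have "\<dots> \<le> j"
  proof (rule card_le_if_separated)
    show "left_end ` ?T \<subseteq> {x - R - len k<..<x + R}"
    proof (rule image_subsetI)
      fix \<tau> assume "\<tau> \<in> ?T"
      then obtain y where "\<tau> \<in> words n k" "y \<in> J \<tau>" "y \<in> A" by blast
      then have "y \<in> {left_end \<tau>..left_end \<tau> + len k}" "dist x y < R"
        using J_eq_Icc[of \<tau> k] assms(1) by auto
      then show "left_end \<tau> \<in> {x - R - len k<..<x + R}"
        by (auto simp: dist_real_def abs_less_iff)
    qed
    show "x + R - (x - R - len k) \<le> real j * len k" using assms(2) by simp
  qed (use len_pos left_end_separated in auto)
  finally show ?thesis .
qed

lemma moran_set_subset_level: "k \<ge> 1 \<Longrightarrow> moran_set n J \<subseteq> (\<Union>\<sigma>\<in>words n k. J \<sigma>)"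
  unfolding moran_set_def by auto

lemma J_meets_moran_set:
  assumes \<sigma>: "\<sigma> \<in> words n k"
  shows "J \<sigma> \<inter> moran_set n J \<noteq> {}"
proof -
  define F where "F m = J (\<sigma> @ replicate m 1)" for m
  have words_F: "\<sigma> @ replicate m 1 \<in> words n (k + m)" for m
    using append_mem_words[OF \<sigma> replicate_one_mem_words_from] .
  have "\<Inter>(range F) \<noteq> {}"
  proof (rule compact_nest)
    show "compact (F m)" "F m \<noteq> {}" for m
      using J_eq_Icc[OF words_F[of m]] len_pos[of "k + m"] by (simp_all add: F_def)
    show "F m' \<subseteq> F m" if "m \<le> m'" for m m'
    proof -
      have "take (k + m) (\<sigma> @ replicate m' 1) = \<sigma> @ replicate m 1"
        using \<sigma> that by (simp add: words_def)
      then show ?thesis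
        using J_subset_J_take[of "\<sigma> @ replicate m' 1" "k + m" "m' - m"] words_F[of m'] that
        by (simp add: F_def)
    qed
  qed
  then obtain y where y: "y \<in> F m" for m by blast
  have "y \<in> (\<Union>\<tau>\<in>words n j. J \<tau>)" for j
  proof -
    have w: "\<sigma> @ replicate j 1 \<in> words n (j + k)" using words_F[of j] by (simp add: add.commute)
    then have "y \<in> J (take j (\<sigma> @ replicate j 1))"
      using J_subset_J_take[OF w] y[of j] by (auto simp: F_def)
    then show ?thesis using take_mem_words[OF w] by blast
  qed
  moreover have "y \<in> J \<sigma>" using y[of 0] by (simp add: F_def)
  ultimately show ?thesis unfolding moran_set_def by blast
qed

lemma finite_words_meeting: "finite {\<tau> \<in> words n k. P \<tau>}"
  using finite_words by simp

lemma covering_number_le_card_words: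
  assumes "m \<ge> 1" and "len m < r" and "A \<subseteq> moran_set n J"
  shows "covering_number r A \<le> card {\<tau> \<in> words n m. J \<tau> \<inter> A \<noteq> {}}"
proof -
  let ?T = "{\<tau> \<in> words n m. J \<tau> \<inter> A \<noteq> {}}"
  let ?center = "\<lambda>\<tau>. left_end \<tau> + len m / 2"
  have "A \<subseteq> (\<Union>\<tau>\<in>?T. ball (?center \<tau>) r)"
  proof
    fix y assume "y \<in> A"
    then obtain \<tau> where \<tau>: "\<tau> \<in> words n m" "y \<in> J \<tau>"
      using moran_set_subset_level[OF assms(1)] assms(3) by blast
    then have "y \<in> {left_end \<tau>..left_end \<tau> + len m}"
      using J_eq_Icc[of \<tau> m] by simp
    then have "y \<in> ball (?center \<tau>) r"
      using assms(2) len_pos[of m] by (auto simp: dist_real_def abs_if)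
    moreover have "\<tau> \<in> ?T" using \<tau> \<open>y \<in> A\<close> by blast
    ultimately show "y \<in> (\<Union>\<tau>\<in>?T. ball (?center \<tau>) r)" by blast
  qed
  then have "covering_number r A \<le> card (?center ` ?T)"
    by (intro covering_number_le) (simp_all add: finite_words_meeting)
  also have "\<dots> \<le> card ?T"
    by (rule card_image_le) (rule finite_words_meeting)
  finally show ?thesis .
qed

lemma card_words_meeting_le_descendants:
  assumes "k \<le> m"
  shows "card {\<tau> \<in> words n m. J \<tau> \<inter> A \<noteq> {}}
    \<le> card {\<rho> \<in> words n k. J \<rho> \<inter> A \<noteq> {}} * block_prod n k (m - k)"
proof -
  let ?S = "{\<rho> \<in> words n k. J \<rho> \<inter> A \<noteq> {}}" and ?W = "words_from n k (m - k)"
  have "{\<tau> \<in> words n m. J \<tau> \<inter> A \<noteq> {}} \<subseteq> (\<lambda>(\<rho>, w). \<rho> @ w) ` (?S \<times> ?W)"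
  proof
    fix \<tau> assume \<tau>: "\<tau> \<in> {\<tau> \<in> words n m. J \<tau> \<inter> A \<noteq> {}}"
    then have \<tau>_words: "\<tau> \<in> words n (k + (m - k))" using assms by simp
    then have "take k \<tau> \<in> ?S"
      using J_subset_J_take[OF \<tau>_words] take_mem_words[OF \<tau>_words] \<tau> by blast
    then show "\<tau> \<in> (\<lambda>(\<rho>, w). \<rho> @ w) ` (?S \<times> ?W)"
      using drop_mem_words_from[OF \<tau>_words] by (intro image_eqI[of _ _ "(take k \<tau>, drop k \<tau>)"]) auto
  qed
  then have "card {\<tau> \<in> words n m. J \<tau> \<inter> A \<noteq> {}} \<le> card ((\<lambda>(\<rho>, w). \<rho> @ w) ` (?S \<times> ?W))"
    by (rule card_mono[rotated]) (simp add: finite_words finite_words_from)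
  also have "\<dots> \<le> card (?S \<times> ?W)"
    by (rule card_image_le) (simp add: finite_words finite_words_from)
  also have "\<dots> = card ?S * block_prod n k (m - k)"
    by (simp add: card_cartesian_product card_words_from)
  finally show ?thesis .
qed

section \<open>Covering estimates\<close>

lemma covering_number_ball_le_block_prod:
  assumes "k \<le> m" and "R \<le> len k" and "len (Suc m) < r"
  shows "covering_number r (ball x R \<inter> moran_set n J) \<le> 3 * block_prod n k (Suc m - k)"
proof -
  let ?A = "ball x R \<inter> moran_set n J"
  have "covering_number r ?A \<le> card {\<tau> \<in> words n (Suc m). J \<tau> \<inter> ?A \<noteq> {}}"
    using assms(3) by (intro covering_number_le_card_words) auto
  also have "\<dots> \<le> card {\<rho> \<in> words n k. J \<rho> \<inter> ?A \<noteq> {}} * block_prod n k (Suc m - k)"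
    using assms(1) by (intro card_words_meeting_le_descendants) simp
  also have "\<dots> \<le> 3 * block_prod n k (Suc m - k)"
    using assms(2) by (intro mult_right_mono card_words_meeting_le[of _ x R]) auto
  finally show ?thesis .
qed

lemma ratio_le_block_prod_c:
  assumes "k \<le> m" and "len (Suc k) < R" and "0 < r" and "r \<le> len m" and "r < R"
  shows "r / R \<le> block_prod c (Suc k) (m - Suc k)"
proof (cases "k = m")
  case True
  then show ?thesis using assms by simp
next
  case False
  then have "len m = len (Suc k) * block_prod c (Suc k) (m - Suc k)"
    using len_add[of "Suc k" "m - Suc k"] assms(1) by simp
  then have "block_prod c (Suc k) (m - Suc k) = len m / len (Suc k)"
    using len_pos[of "Suc k"] by (simp add: field_simps)
  also have "r / R \<le> len m / len (Suc k)"
    using assms len_pos[of "Suc k"] by (intro frac_le) auto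
  finally show ?thesis by simp
qed

lemma block_prod_le_if_block_bound:
  assumes N: "\<And>i. i \<ge> 1 \<Longrightarrow> n i \<le> N" and "s \<ge> 0"
    and bound: "\<And>k l. k \<ge> 1 \<Longrightarrow> real (block_prod n k l) \<le> K * block_prod c k l powr (-s)"
    and "k \<le> m" and "len (Suc k) < R" and "0 < r" and "r \<le> len m" and "r < R"
  shows "real (block_prod n k (Suc m - k)) \<le> real N ^ 2 * K * (R / r) powr s"
proof -
  txt \<open>The first level of the block and, if \<open>k < m\<close>, its last level are not controlled by the
    scale ratio \<open>R / r\<close>; each costs a factor \<open>N\<close>.\<close>
  define l where "l = m - Suc k"
  define e where "e = Suc m - k - Suc l"
  have "Suc m - k = 1 + l + e" "e \<le> 1"
    using \<open>k \<le> m\<close> by (auto simp: l_def e_def)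
  then have "block_prod n k (Suc m - k) \<le> N ^ (1 + e) * block_prod n (Suc k) l"
    using block_prod_n_le_middle[OF N, of k 1 l e] by simp
  also have "\<dots> \<le> N ^ 2 * block_prod n (Suc k) l"
    using \<open>e \<le> 1\<close> N[of 1] n_ge_2[of 1] by (intro mult_right_mono power_increasing) auto
  finally have n_part: "real (block_prod n k (Suc m - k)) \<le> real N ^ 2 * real (block_prod n (Suc k) l)"
    by (metis of_nat_le_iff of_nat_mult of_nat_power)
  have "block_prod c (Suc k) l powr (-s) \<le> (r / R) powr (-s)"
    using ratio_le_block_prod_c[OF assms(4-8)] assms(6,8) \<open>s \<ge> 0\<close>
    unfolding l_def by (intro powr_mono2') auto
  also have "(r / R) powr (-s) = (R / r) powr s"
    using \<open>0 < r\<close> \<open>r < R\<close> by (simp add: powr_minus_divide powr_divide)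
  finally have "K * block_prod c (Suc k) l powr (-s) \<le> K * (R / r) powr s"
    using bound[of 1 0] by (intro mult_left_mono) simp_all
  moreover have "real (block_prod n (Suc k) l) \<le> K * block_prod c (Suc k) l powr (-s)"
    by (rule bound) simp
  ultimately have "real N ^ 2 * real (block_prod n (Suc k) l) \<le> real N ^ 2 * (K * (R / r) powr s)"
    by (intro mult_left_mono) simp_all
  with n_part show ?thesis by (simp add: mult.assoc)
qed

lemma covering_number_le_if_block_bound:
  assumes N: "\<And>i. i \<ge> 1 \<Longrightarrow> n i \<le> N" and "s \<ge> 0"
    and bound: "\<And>k l. k \<ge> 1 \<Longrightarrow> real (block_prod n k l) \<le> K * block_prod c k l powr (-s)"
    and "0 < r" and "r < R" and "R \<le> len 0"
  shows "real (covering_number r (ball x R \<inter> moran_set n J)) \<le> 3 * real N ^ 2 * K * (R / r) powr s"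
proof -
  obtain k where k: "len (Suc k) < R" "R \<le> len k"
    using len_bracket[of R] assms by auto
  obtain m where m: "len (Suc m) < r" "r \<le> len m"
    using len_bracket[of r] assms by auto
  have "k \<le> m"
  proof (rule ccontr)
    assume "\<not> k \<le> m"
    then have "len k \<le> len (Suc m)" by (intro len_antimono) simp
    then show False using k m \<open>r < R\<close> by simp
  qed
  have "real (covering_number r (ball x R \<inter> moran_set n J))
      \<le> 3 * real (block_prod n k (Suc m - k))"
    using covering_number_ball_le_block_prod[OF \<open>k \<le> m\<close> k(2) m(1)]
    by (metis of_nat_le_iff of_nat_mult of_nat_numeral)
  also have "\<dots> \<le> 3 * (real N ^ 2 * K * (R / r) powr s)"
    using block_prod_le_if_block_bound[OF N \<open>s \<ge> 0\<close> bound \<open>k \<le> m\<close> k(1) \<open>0 < r\<close> m(2) \<open>r < R\<close>]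
    by simp
  finally show ?thesis by (simp add: mult.assoc)
qed

lemma assouad_exponent_if_block_bound:
  assumes N: "\<And>i. i \<ge> 1 \<Longrightarrow> n i \<le> N" and "s \<ge> 0"
    and bound: "\<And>k l. k \<ge> 1 \<Longrightarrow> real (block_prod n k l) \<le> K * block_prod c k l powr (-s)"
  shows "assouad_exponent (moran_set n J) s"
proof -
  have "0 < 3 * real N ^ 2 * K"
    using bound[of 1 0] N[of 1] n_ge_2[of 1] by simp
  moreover have "\<forall>r R. 0 < r \<and> r < R \<and> R < len 0 \<longrightarrow> (\<forall>x\<in>moran_set n J.
      real (covering_number r (ball x R \<inter> moran_set n J)) \<le> 3 * real N ^ 2 * K * (R / r) powr s)"
    using covering_number_le_if_block_bound[OF N \<open>s \<ge> 0\<close> bound] by simp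
  ultimately show ?thesis
    unfolding assouad_exponent_def using \<open>s \<ge> 0\<close> len_pos[of 0] by blast
qed

lemma block_prod_le_covering_number:
  assumes \<sigma>: "\<sigma> \<in> words n k" and "x \<in> J \<sigma>"
  shows "block_prod n k l \<le> 2 * covering_number (len (k + l) / 2) (ball x (2 * len k) \<inter> moran_set n J)"
proof -
  let ?r = "len (k + l) / 2" and ?A = "ball x (2 * len k) \<inter> moran_set n J"
  let ?F = "\<lambda>z. {w \<in> words_from n k l. J (\<sigma> @ w) \<inter> ball z ?r \<noteq> {}}"
  have "bounded ?A" by (simp add: bounded_Int)
  obtain C where C: "finite C" "?A \<subseteq> (\<Union>z\<in>C. ball z ?r)" "card C = covering_number ?r ?A"
    by (rule covering_number_attained[OF \<open>bounded ?A\<close>, of ?r]) (simp add: len_pos)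
  have cover: "words_from n k l \<subseteq> (\<Union>z\<in>C. ?F z)"
  proof
    fix w assume w: "w \<in> words_from n k l"
    have \<sigma>w: "\<sigma> @ w \<in> words n (k + l)" using append_mem_words[OF \<sigma> w] .
    obtain y where y: "y \<in> J (\<sigma> @ w)" "y \<in> moran_set n J"
      using J_meets_moran_set[OF \<sigma>w] by blast
    have "take k (\<sigma> @ w) = \<sigma>" using \<sigma> by (simp add: words_def)
    then have "y \<in> J \<sigma>" using J_subset_J_take[OF \<sigma>w] y(1) by auto
    then have "dist x y < 2 * len k"
      using \<open>x \<in> J \<sigma>\<close> J_eq_Icc[OF \<sigma>] len_pos[of k] by (auto simp: dist_real_def)
    then have "y \<in> ?A" using y(2) by simp
    then obtain z where "z \<in> C" "y \<in> ball z ?r" using C(2) by blast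
    then show "w \<in> (\<Union>z\<in>C. ?F z)" using w y(1) by blast
  qed
  have card_F: "card (?F z) \<le> 2" for z
  proof -
    have "card (?F z) = card ((@) \<sigma> ` ?F z)"
      by (rule card_image[symmetric]) (simp add: inj_on_def)
    also have "\<dots> \<le> card {\<tau> \<in> words n (k + l). J \<tau> \<inter> ball z ?r \<noteq> {}}"
      using append_mem_words[OF \<sigma>] by (intro card_mono finite_words_meeting) auto
    also have "\<dots> \<le> 2"
      by (rule card_words_meeting_le) auto
    finally show ?thesis .
  qed
  have "finite (?F z)" for z
    by (rule finite_subset[OF _ finite_words_from]) blast
  then have "card (words_from n k l) \<le> card (\<Union>z\<in>C. ?F z)"
    using cover C(1) by (intro card_mono finite_UN_I)
  then have "block_prod n k l \<le> card (\<Union>z\<in>C. ?F z)"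
    by (simp add: card_words_from)
  also have "\<dots> \<le> (\<Sum>z\<in>C. card (?F z))"
    by (rule card_UN_le[OF C(1)])
  also have "\<dots> \<le> (\<Sum>z\<in>C. 2)"
    by (rule sum_mono) (rule card_F)
  finally show ?thesis using C(3) by simp
qed

lemma block_bound_if_covering_bound:
  assumes cov: "\<forall>r R. 0 < r \<and> r < R \<and> R < b0 \<longrightarrow>
      (\<forall>x\<in>moran_set n J. real (covering_number r (ball x R \<inter> moran_set n J)) \<le> C * (R / r) powr s)"
    and "2 * len k < b0"
  shows "real (block_prod n k l) \<le> 2 * C * 4 powr s * block_prod c k l powr (-s)"
proof -
  have \<sigma>: "replicate k 1 \<in> words n k"
    using replicate_one_mem_words_from by (simp add: words_eq_words_from)
  then obtain x where x: "x \<in> J (replicate k 1)" "x \<in> moran_set n J"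
    using J_meets_moran_set by blast
  let ?r = "len (k + l) / 2" and ?R = "2 * len k"
  have "0 < ?r" "?r < ?R"
    using len_pos[of "k + l"] len_pos[of k] len_antimono[of k "k + l"] by auto
  have "real (block_prod n k l) \<le> 2 * real (covering_number ?r (ball x ?R \<inter> moran_set n J))"
    using block_prod_le_covering_number[OF \<sigma> x(1), of l]
    by (metis of_nat_le_iff of_nat_mult of_nat_numeral)
  also have "\<dots> \<le> 2 * (C * (?R / ?r) powr s)"
  proof -
    have "real (covering_number ?r (ball x ?R \<inter> moran_set n J)) \<le> C * (?R / ?r) powr s"
      using cov \<open>0 < ?r\<close> \<open>?r < ?R\<close> \<open>2 * len k < b0\<close> x(2) by blast
    then show ?thesis by simp
  qed
  also have "?R / ?r = 4 / block_prod c k l"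
    using len_add[of k l] len_pos[of k] block_prod_c_pos[of k l] by (simp add: field_simps)
  also have "(4 / block_prod c k l) powr s = 4 powr s * block_prod c k l powr (-s)"
    using block_prod_c_pos[of k l] by (simp add: powr_divide powr_minus_divide)
  finally show ?thesis by (simp add: mult_ac)
qed

lemma eventual_block_bound_if_assouad_exponent:
  assumes N: "\<And>i. i \<ge> 1 \<Longrightarrow> n i \<le> N" and "assouad_exponent (moran_set n J) s"
  obtains K l0 where "K > 0"
    and "\<And>k l. l0 \<le> l \<Longrightarrow> real (block_prod n k l) \<le> K * block_prod c k l powr (-s)"
proof -
  obtain b0 C where "s \<ge> 0" "b0 > 0" "C > 0"
    and cov: "\<forall>r R. 0 < r \<and> r < R \<and> R < b0 \<longrightarrow>
      (\<forall>x\<in>moran_set n J. real (covering_number r (ball x R \<inter> moran_set n J)) \<le> C * (R / r) powr s)"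
    using assms(2) unfolding assouad_exponent_def by blast
  obtain k0 where "len k0 < b0 / 2"
    using exists_len_less \<open>b0 > 0\<close> by (metis half_gt_zero)
  then have deep: "real (block_prod n k l) \<le> 2 * C * 4 powr s * block_prod c k l powr (-s)"
    if "k \<ge> k0" for k l
    using len_antimono[OF that] by (intro block_bound_if_covering_bound[OF cov]) auto
  have "real (block_prod n k l) \<le> real N ^ k0 * (2 * C * 4 powr s) * block_prod c k l powr (-s)"
    if "k0 \<le> l" for k l
    using \<open>C > 0\<close> by (intro block_bound_extend[OF N \<open>s \<ge> 0\<close> _ deep that] mult_nonneg_nonneg) auto
  moreover have "0 < real N ^ k0 * (2 * C * 4 powr s)"
    using N[of 1] n_ge_2[of 1] \<open>C > 0\<close> by simp
  ultimately show ?thesis using that by blast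
qed

lemma limsup_le_if_assouad_exponent:
  assumes N: "\<And>i. i \<ge> 1 \<Longrightarrow> n i \<le> N" and "assouad_exponent (moran_set n J) s"
  shows "limsup (\<lambda>l. ereal (dim_ratio_sup l)) \<le> ereal s"
proof -
  obtain K l0 where "K > 0"
    and "\<And>k l. l0 \<le> l \<Longrightarrow> real (block_prod n k l) \<le> K * block_prod c k l powr (-s)"
    using eventual_block_bound_if_assouad_exponent[OF assms] by blast
  then show ?thesis by (intro limsup_dim_ratio_sup_le) auto
qed

lemma assouad_exponent_if_limsup_less:
  assumes N: "\<And>i. i \<ge> 1 \<Longrightarrow> n i \<le> N" and "s \<ge> 0"
    and "limsup (\<lambda>l. ereal (dim_ratio_sup l)) < ereal s"
  shows "assouad_exponent (moran_set n J) s"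
proof -
  obtain K where K: "\<And>k l. k \<ge> 1 \<Longrightarrow> real (block_prod n k l) \<le> K * block_prod c k l powr (-s)"
    using block_bound_if_limsup_less[OF assms] by blast
  show ?thesis by (rule assouad_exponent_if_block_bound[OF N \<open>s \<ge> 0\<close> K])
qed

end

theorem theorem1:
  fixes n :: "nat \<Rightarrow> nat" and c :: "nat \<Rightarrow> real" and a b :: real and E :: "real set"
  assumes n_ge: "\<forall>k\<ge>1. n k \<ge> 2"
    and c_pos: "\<forall>k\<ge>1. c k > 0"
    and nc_lt: "\<forall>k\<ge>1. real (n k) * c k < 1"
    and ab: "a < b"
    and E: "E \<in> moran_class {a..b} n c"
    and bdd: "bdd_above (n ` {1..})"
  shows "ereal (assouad_dim E) =
    limsup (\<lambda>l. ereal (SUP k\<in>{1..}.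
       ln (real (\<Prod>i\<in>{k+1..k+l}. n i)) / - ln (\<Prod>i\<in>{k+1..k+l}. c i)))"
proof -
  obtain J where "homogeneous_moran_structure {a..b} n c J" and E_eq: "E = moran_set n J"
    using E by (auto simp: moran_class_def)
  then interpret moran n c a b J
    using n_ge c_pos nc_lt ab by unfold_locales auto
  obtain N where N: "\<And>i. i \<ge> 1 \<Longrightarrow> n i \<le> N"
    using bdd by (auto simp: bdd_above_def)
  obtain d where d: "limsup (\<lambda>l. ereal (dim_ratio_sup l)) = ereal d" and "0 \<le> d"
    by (rule limsup_dim_ratio_sup_real)
  have "assouad_dim E = d"
  proof (rule assouad_dim_eqI)
    fix s assume "assouad_exponent E s"
    then show "d \<le> s" using limsup_le_if_assouad_exponent[OF N] d E_eq by simp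
  next
    fix s assume "d < s"
    then show "assouad_exponent E s"
      using assouad_exponent_if_limsup_less[OF N] d \<open>0 \<le> d\<close> E_eq by simp
  qed
  then show ?thesis
    using d by (simp add: dim_ratio_sup_def dim_ratio_def block_prod_def)
qed

end
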